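(* Let $D$ be a tournament missing disjoint paths of length 2 and let $C=a_1b_1c_1,\dots,a_kb_kc_k$ be a double cycle in $\Delta(D)$. Writing $v^-$ and $v^{++}$ for $N^-_{D[K(C)]}(v)$ and $N^{++}_{D[K(C)]}(v)$, for every $t\in\{1,\dots,k\}$ (indices modulo $k$): (1) if $c_t\notin a_t^-$, then $|a_t^{++}|=|a_t^-|$ when $b_{t+1}\in a_t^-$, and $|a_t^{++}|=|a_t^-|-1$ otherwise; (2) if $a_t\notin c_t^-$, then $|c_t^{++}|=|c_t^-|$ when $b_{t+1}\in c_t^-$, and $|c_t^{++}|=|c_t^-|-1$ otherwise; (3) $|b_t^{++}|=|b_t^-|+1$ when $b_{t+1}\in b_t^-$, and $|b_t^{++}|=|b_t^-|$ otherwise.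
   Context: All digraphs are finite oriented graphs; $D[X]$ is the induced subdigraph. $N^+_H(v)$, $N^-_H(v)$ are out/in-neighborhoods in $H$; $N^{++}_H(v)$ is the set of vertices $w\notin N_H^+(v)\cup\{v\}$ with $u\to w$ in $H$ for some $u\in N_H^+(v)$. A missing edge is a pair of distinct non-adjacent vertices; the missing graph is formed by the missing edges. $D$ is a tournament missing disjoint paths of length 2 if its missing graph is a vertex-disjoint union of paths each with exactly two edges. For missing edges $\{x,y\},\{a,b\}$, $\{x,y\}$ loses to $\{a,b\}$ (written $xy\to ab$) if the endpoints can be labelled so that $x\to a$, $b\notin N^+(x)\cup N^{++}(x)$, $y\to b$, $a\notin N^+(y)\cup N^{++}(y)$ (neighborhoods in $D$). $\Delta(D)$ has the missing edges as vertices and arcs $(e,e')$ whenever $e$ loses to $e'$. For missing paths $abc$, $xyz$, $abc\to xyz$ means each of $ab,bc$ loses to each of $xy,yz$. A double cycle is a sequence $C=a_1b_1c_1,\dots,a_kb_kc_k$ ($k\ge2$) of distinct missing paths of length 2 (components of the missing graph, edges $a_ib_i,b_ic_i$) with $a_ib_ic_i\to a_{i+1}b_{i+1}c_{i+1}$ for all $i$, indices modulo $k$. $K(C)=\{a_i,b_i,c_i:1\le i\le k\}$. *)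

theory Defs
  imports Main
begin

text \<open>A digraph is given by a vertex set V and an arc relation A (A x y means x -> y).\<close>

definition oriented_graph :: "'a set \<Rightarrow> ('a \<Rightarrow> 'a \<Rightarrow> bool) \<Rightarrow> bool" where
  "oriented_graph V A \<longleftrightarrow> finite V \<and> (\<forall>x y. A x y \<longrightarrow> x \<in> V \<and> y \<in> V)
     \<and> (\<forall>x. \<not> A x x) \<and> (\<forall>x y. A x y \<longrightarrow> \<not> A y x)"

text \<open>Neighbourhoods inside the induced subdigraph on S (take S = V for D itself).\<close>
definition Nout :: "('a \<Rightarrow> 'a \<Rightarrow> bool) \<Rightarrow> 'a set \<Rightarrow> 'a \<Rightarrow> 'a set" where
  "Nout A S v = {u \<in> S. A v u}"

definition Nin :: "('a \<Rightarrow> 'a \<Rightarrow> bool) \<Rightarrow> 'a set \<Rightarrow> 'a \<Rightarrow> 'a set" where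
  "Nin A S v = {u \<in> S. A u v}"

definition Nsec :: "('a \<Rightarrow> 'a \<Rightarrow> bool) \<Rightarrow> 'a set \<Rightarrow> 'a \<Rightarrow> 'a set" where
  "Nsec A S v = {w \<in> S. w \<notin> Nout A S v \<and> w \<noteq> v \<and> (\<exists>u \<in> Nout A S v. A u w)}"

definition missing :: "'a set \<Rightarrow> ('a \<Rightarrow> 'a \<Rightarrow> bool) \<Rightarrow> 'a \<Rightarrow> 'a \<Rightarrow> bool" where
  "missing V A x y \<longleftrightarrow> x \<in> V \<and> y \<in> V \<and> x \<noteq> y \<and> \<not> A x y \<and> \<not> A y x"

text \<open>abc is a component of the missing graph which is a path with exactly the two edges ab, bc.\<close>
definition missing_path :: "'a set \<Rightarrow> ('a \<Rightarrow> 'a \<Rightarrow> bool) \<Rightarrow> 'a \<Rightarrow> 'a \<Rightarrow> 'a \<Rightarrow> bool" where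
  "missing_path V A a b c \<longleftrightarrow> missing V A a b \<and> missing V A b c \<and> a \<noteq> c
     \<and> (\<forall>z. missing V A a z \<longrightarrow> z = b) \<and> (\<forall>z. missing V A c z \<longrightarrow> z = b)
     \<and> (\<forall>z. missing V A b z \<longrightarrow> z = a \<or> z = c)"

text \<open>Tournament missing disjoint paths of length 2: oriented graph whose missing graph is a
  vertex-disjoint union of paths with exactly two edges.\<close>
definition tmdp :: "'a set \<Rightarrow> ('a \<Rightarrow> 'a \<Rightarrow> bool) \<Rightarrow> bool" where
  "tmdp V A \<longleftrightarrow> oriented_graph V A \<and>
     (\<forall>x y. missing V A x y \<longrightarrow>
        (\<exists>a b c. missing_path V A a b c \<and> ({x, y} = {a, b} \<or> {x, y} = {b, c})))"

definition loses :: "'a set \<Rightarrow> ('a \<Rightarrow> 'a \<Rightarrow> bool) \<Rightarrow> 'a set \<Rightarrow> 'a set \<Rightarrow> bool" where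
  "loses V A e e' \<longleftrightarrow> (\<exists>x y a b. e = {x, y} \<and> e' = {a, b} \<and>
      A x a \<and> b \<notin> Nout A V x \<union> Nsec A V x \<and>
      A y b \<and> a \<notin> Nout A V y \<union> Nsec A V y)"

definition path_loses :: "'a set \<Rightarrow> ('a \<Rightarrow> 'a \<Rightarrow> bool) \<Rightarrow> 'a \<Rightarrow> 'a \<Rightarrow> 'a \<Rightarrow> 'a \<Rightarrow> 'a \<Rightarrow> 'a \<Rightarrow> bool" where
  "path_loses V A a b c x y z \<longleftrightarrow>
     loses V A {a, b} {x, y} \<and> loses V A {a, b} {y, z} \<and>
     loses V A {b, c} {x, y} \<and> loses V A {b, c} {y, z}"

text \<open>Double cycle a_0 b_0 c_0, ..., a_(k-1) b_(k-1) c_(k-1) (0-based, indices mod k).\<close>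
definition double_cycle :: "'a set \<Rightarrow> ('a \<Rightarrow> 'a \<Rightarrow> bool) \<Rightarrow> nat \<Rightarrow> (nat \<Rightarrow> 'a) \<Rightarrow> (nat \<Rightarrow> 'a) \<Rightarrow> (nat \<Rightarrow> 'a) \<Rightarrow> bool" where
  "double_cycle V A k a b c \<longleftrightarrow> 2 \<le> k
     \<and> (\<forall>i<k. missing_path V A (a i) (b i) (c i))
     \<and> (\<forall>i<k. \<forall>j<k. i \<noteq> j \<longrightarrow> {a i, b i, c i} \<noteq> {a j, b j, c j})
     \<and> (\<forall>i<k. path_loses V A (a i) (b i) (c i)
                (a (Suc i mod k)) (b (Suc i mod k)) (c (Suc i mod k)))"

definition Kset :: "nat \<Rightarrow> (nat \<Rightarrow> 'a) \<Rightarrow> (nat \<Rightarrow> 'a) \<Rightarrow> (nat \<Rightarrow> 'a) \<Rightarrow> 'a set" where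
  "Kset k a b c = (\<Union>i<k. {a i, b i, c i})"

end

theory Submission
  imports Defs
begin

text \<open>Write P i for the missing path a i b i c i. Because every missing edge of P t loses to
  every missing edge of P (t+1), the arcs between consecutive paths follow a rigid pattern:
  each vertex of P t dominates exactly one end of each missing edge of P (t+1), no arc from
  P (t+1) back to P t is the last arc of a 2-path, and the two ends of a missing edge of P t are
  joined by a 2-path through P (t+1). Walking backwards around the cycle, a vertex dominating
  both ends of a missing edge of P (t+1) dominates all of P t; so no vertex outside P i
  dominates both ends of a missing edge of P i. Consequently, for a vertex v of P t without
  in-neighbours in P t, the second out-neighbourhood of v in K(C) consists of the missing
  partners of v together with all in-neighbours of v outside P (t+1), and these are either
  b (t+1) alone or a (t+1) and c (t+1).\<close>

definition no_path2 :: "('a \<Rightarrow> 'a \<Rightarrow> bool) \<Rightarrow> 'a \<Rightarrow> 'a \<Rightarrow> bool" where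
  "no_path2 A x y \<longleftrightarrow> \<not> (\<exists>u. A x u \<and> A u y)"

lemma oriented_graph_arcD:
  assumes "oriented_graph V A" "A x y"
  shows "x \<in> V" "y \<in> V" "\<not> A y x"
  using assms unfolding oriented_graph_def by blast+

lemma oriented_graph_irrefl: "oriented_graph V A \<Longrightarrow> \<not> A x x"
  unfolding oriented_graph_def by blast

lemma adjacent_if_not_missing:
  "x \<in> V \<Longrightarrow> y \<in> V \<Longrightarrow> x \<noteq> y \<Longrightarrow> \<not> missing V A x y \<Longrightarrow> A x y \<or> A y x"
  unfolding missing_def by blast

lemma notin_Nout_Nsec_iff:
  assumes "oriented_graph V A" "y \<in> V"
  shows "y \<notin> Nout A V x \<union> Nsec A V x \<longleftrightarrow> \<not> A x y \<and> no_path2 A x y"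
  using assms oriented_graph_arcD[OF assms(1)]
  unfolding Nout_def Nsec_def no_path2_def by blast

lemma losesE:
  assumes og: "oriented_graph V A" and "loses V A e e'"
  obtains x y u w where "e = {x, y}" "e' = {u, w}" "A x u" "A y w"
    "\<not> A x w" "no_path2 A x w" "\<not> A y u" "no_path2 A y u"
proof -
  from assms(2) obtain x y u w where "e = {x, y}" "e' = {u, w}" "A x u" "A y w"
    and "w \<notin> Nout A V x \<union> Nsec A V x" "u \<notin> Nout A V y \<union> Nsec A V y"
    unfolding loses_def by blast
  moreover have "u \<in> V" "w \<in> V" using oriented_graph_arcD(2)[OF og] \<open>A x u\<close> \<open>A y w\<close> by blast+
  ultimately show thesis using that notin_Nout_Nsec_iff[OF og] by blast
qed

lemma loses_back_arc_no_path2: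
  assumes og: "oriented_graph V A" and "loses V A {p, p'} {q, q'}"
    and "x \<in> {p, p'}" "y \<in> {q, q'}" "A y x"
  shows "no_path2 A x y"
proof -
  from losesE[OF og assms(2)] obtain x0 y0 u w where
    "{p, p'} = {x0, y0}" "{q, q'} = {u, w}" "A x0 u" "A y0 w"
    "no_path2 A x0 w" "no_path2 A y0 u" by metis
  moreover have "x \<in> {x0, y0}" "y \<in> {u, w}" using assms(3,4) calculation(1,2) by simp_all
  ultimately show ?thesis using assms(5) oriented_graph_arcD(3)[OF og] by auto
qed

lemma loses_out_exactly_one:
  assumes og: "oriented_graph V A" and "loses V A {p, p'} {q, q'}" and "x \<in> {p, p'}"
  shows "A x q \<longleftrightarrow> \<not> A x q'"
proof -
  from losesE[OF og assms(2)] obtain x0 y0 u w where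
    "{p, p'} = {x0, y0}" "{q, q'} = {u, w}" "A x0 u" "A y0 w" "\<not> A x0 w" "\<not> A y0 u" by metis
  then show ?thesis using assms(3) by (auto simp: doubleton_eq_iff)
qed

lemma loses_path2:
  assumes og: "oriented_graph V A" and "loses V A {x, y} {q, q'}" and "x \<noteq> y"
    and "\<forall>u\<in>{q, q'}. A u y \<or> A y u"
  shows "\<exists>u\<in>{q, q'}. A x u \<and> A u y"
proof -
  from losesE[OF og assms(2)] obtain x0 y0 u w where
    "{x, y} = {x0, y0}" "{q, q'} = {u, w}" "A x0 u" "A y0 w" "\<not> A x0 w" "\<not> A y0 u" by metis
  then show ?thesis using assms(3,4) by (auto simp: doubleton_eq_iff)
qed

lemma card_Nsec_by_in_neighbours:
  assumes og: "oriented_graph V A" and K: "finite K" "K \<subseteq> V" "v \<in> K"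
    and F: "F \<subseteq> Nin A K v" "\<forall>f\<in>F. \<not> (\<exists>u\<in>K. A v u \<and> A u f)"
    and in_reached: "\<forall>w\<in>Nin A K v - F. \<exists>u\<in>K. A v u \<and> A u w"
    and partners_reached: "\<forall>r. missing V A v r \<longrightarrow> r \<in> K \<and> (\<exists>u\<in>K. A v u \<and> A u r)"
  shows "card (Nsec A K v) + card F = card (Nin A K v) + card {r. missing V A v r}"
proof -
  let ?R = "{r. missing V A v r}"
  have "Nsec A K v = (Nin A K v - F) \<union> ?R"
  proof (intro set_eqI iffI)
    fix w assume w: "w \<in> Nsec A K v"
    then have "w \<in> V" "\<not> A v w" "w \<noteq> v" using K unfolding Nsec_def Nout_def by auto
    then have "missing V A v w \<or> A w v"
      using K adjacent_if_not_missing[of v V w A] by blast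
    then show "w \<in> (Nin A K v - F) \<union> ?R"
      using w F(2) unfolding Nsec_def Nout_def Nin_def by blast
  next
    fix w assume "w \<in> (Nin A K v - F) \<union> ?R"
    then show "w \<in> Nsec A K v"
      using in_reached partners_reached oriented_graph_arcD(3)[OF og] oriented_graph_irrefl[OF og]
      unfolding Nsec_def Nout_def Nin_def missing_def by blast
  qed
  moreover have "finite (Nin A K v)" "finite ?R" "(Nin A K v - F) \<inter> ?R = {}"
    using K partners_reached finite_subset[of ?R K] unfolding Nin_def missing_def by auto
  moreover have "card (Nin A K v - F) + card F = card (Nin A K v)"
    using F(1) \<open>finite (Nin A K v)\<close>
    by (metis card_Diff_subset card_mono finite_subset le_add_diff_inverse2)
  ultimately show ?thesis by (simp add: card_Un_disjoint)
qed

lemma missing_path_partners: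
  assumes "missing_path V A a b c"
  shows "{z. missing V A a z} = {b}" "{z. missing V A b z} = {a, c}" "{z. missing V A c z} = {b}"
proof -
  have "missing V A b a" "missing V A c b"
    using assms unfolding missing_path_def missing_def by blast+
  then show "{z. missing V A a z} = {b}" "{z. missing V A b z} = {a, c}"
    "{z. missing V A c z} = {b}"
    using assms unfolding missing_path_def by blast+
qed

definition missing_ball2 :: "'a set \<Rightarrow> ('a \<Rightarrow> 'a \<Rightarrow> bool) \<Rightarrow> 'a \<Rightarrow> 'a set" where
  "missing_ball2 V A x =
     {x} \<union> {z. missing V A x z} \<union> (\<Union>y \<in> {z. missing V A x z}. {z. missing V A y z})"

lemma missing_path_eq_missing_ball2:
  assumes "missing_path V A a b c" "x \<in> {a, b, c}"
  shows "missing_ball2 V A x = {a, b, c}"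
  using assms(2) missing_path_partners[OF assms(1)] unfolding missing_ball2_def
  by (elim insertE emptyE) (simp_all add: insert_commute)

locale double_cycle_digraph =
  fixes V :: "'a set" and A :: "'a \<Rightarrow> 'a \<Rightarrow> bool"
    and k :: nat and a b c :: "nat \<Rightarrow> 'a"
  assumes oriented: "oriented_graph V A" and cycle: "double_cycle V A k a b c"
begin

abbreviation nxt :: "nat \<Rightarrow> nat" where "nxt i \<equiv> Suc i mod k"

definition P :: "nat \<Rightarrow> 'a set" where "P i = {a i, b i, c i}"

definition missing_edges :: "nat \<Rightarrow> 'a set set" where
  "missing_edges i = {{a i, b i}, {b i, c i}}"

lemma k_ge_2: "2 \<le> k"
  using cycle unfolding double_cycle_def by blast

lemma nxt_less: "nxt i < k"
  using k_ge_2 by simp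

lemma nxt_neq: "i < k \<Longrightarrow> nxt i \<noteq> i"
  using k_ge_2 by (cases "Suc i = k") auto

lemma missing_path_at: "i < k \<Longrightarrow> missing_path V A (a i) (b i) (c i)"
  using cycle unfolding double_cycle_def by blast

lemmas missing_partners = missing_path_partners[OF missing_path_at]

lemma P_subset_V: "i < k \<Longrightarrow> P i \<subseteq> V"
  using missing_path_at[of i] unfolding P_def missing_path_def missing_def by blast

lemma Kset_eq: "Kset k a b c = (\<Union>i<k. P i)"
  unfolding Kset_def P_def ..

lemma P_disjoint:
  assumes "i < k" "j < k" "x \<in> P i" "x \<in> P j"
  shows "i = j"
proof -
  have "P i = P j"
    using missing_path_eq_missing_ball2[OF missing_path_at] assms unfolding P_def by metis
  then show ?thesis using cycle assms(1,2) unfolding double_cycle_def P_def by blast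
qed

lemma missing_edge_of_missing:
  assumes "i < k" "x \<in> P i" "missing V A x y"
  shows "{x, y} \<in> missing_edges i"
proof -
  have "y \<in> {z. missing V A x z}" using assms(3) by simp
  then show ?thesis using assms(2) missing_partners[OF assms(1)] unfolding P_def missing_edges_def
    by (elim insertE emptyE) (auto simp: insert_commute)
qed

lemma missing_edges_subset: "e \<in> missing_edges i \<Longrightarrow> e \<subseteq> P i"
  unfolding missing_edges_def P_def by auto

lemma missing_partner_exists: "i < k \<Longrightarrow> x \<in> P i \<Longrightarrow> \<exists>y. missing V A x y"
  using missing_partners[of i] unfolding P_def by blast

lemma loses_next:
  assumes "i < k" "e \<in> missing_edges i" "f \<in> missing_edges (nxt i)"
  shows "loses V A e f"
proof -
  have "path_loses V A (a i) (b i) (c i) (a (nxt i)) (b (nxt i)) (c (nxt i))"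
    using cycle assms(1) unfolding double_cycle_def by blast
  then show ?thesis using assms(2,3) unfolding path_loses_def missing_edges_def by blast
qed

lemma adjacent_across:
  assumes "i < k" "j < k" "i \<noteq> j" "x \<in> P i" "y \<in> P j"
  shows "A x y \<or> A y x"
proof -
  have "y \<notin> P i" using P_disjoint[OF assms(1,2) _ assms(5)] assms(3) by blast
  then have "\<not> missing V A x y"
    using missing_edge_of_missing[OF assms(1,4)] missing_edges_subset[of "{x, y}" i] by blast
  moreover have "x \<noteq> y" using \<open>y \<notin> P i\<close> assms(4) by blast
  moreover have "x \<in> V" "y \<in> V" using P_subset_V assms(1,2,4,5) by blast+
  ultimately show ?thesis using adjacent_if_not_missing[of x V y A] by blast
qed

lemma back_arc_no_path2:
  assumes "t < k" "x \<in> P t" "y \<in> P (nxt t)" "A y x"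
  shows "no_path2 A x y"
proof -
  obtain x' y' where "missing V A x x'" "missing V A y y'"
    using missing_partner_exists assms(1-3) nxt_less by blast
  then have "{x, x'} \<in> missing_edges t" "{y, y'} \<in> missing_edges (nxt t)"
    using missing_edge_of_missing assms(1-3) nxt_less by blast+
  then have "loses V A {x, x'} {y, y'}" using loses_next[OF assms(1)] by blast
  then show ?thesis using loses_back_arc_no_path2[OF oriented _ _ _ assms(4)] by blast
qed

lemma out_exactly_one:
  assumes "t < k" "z \<in> P t" "x \<in> P (nxt t)" "missing V A x y"
  shows "A z x \<longleftrightarrow> \<not> A z y"
proof -
  obtain z' where "missing V A z z'" using missing_partner_exists assms(1,2) by blast
  then have "{z, z'} \<in> missing_edges t" using missing_edge_of_missing assms(1,2) by blast
  moreover have "{x, y} \<in> missing_edges (nxt t)"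
    using missing_edge_of_missing[OF nxt_less assms(3,4)] .
  ultimately have "loses V A {z, z'} {x, y}" using loses_next[OF assms(1)] by blast
  then show ?thesis using loses_out_exactly_one[OF oriented] by blast
qed

lemma missing_partner_path2:
  assumes "t < k" "v \<in> P t" "missing V A v r"
  shows "\<exists>u\<in>P (nxt t). A v u \<and> A u r"
proof -
  have "{a (nxt t), b (nxt t)} \<in> missing_edges (nxt t)" unfolding missing_edges_def by simp
  then have "loses V A {v, r} {a (nxt t), b (nxt t)}"
    using loses_next[OF assms(1) missing_edge_of_missing[OF assms]] by blast
  moreover have "v \<noteq> r" using assms(3) unfolding missing_def by blast
  moreover have "r \<in> P t"
    using missing_edges_subset[OF missing_edge_of_missing[OF assms]] by blast
  then have "\<forall>u\<in>{a (nxt t), b (nxt t)}. A u r \<or> A r u"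
    using adjacent_across[OF nxt_less assms(1) nxt_neq[OF assms(1)]] unfolding P_def by blast
  ultimately have "\<exists>u\<in>{a (nxt t), b (nxt t)}. A v u \<and> A u r"
    using loses_path2[OF oriented] by blast
  then show ?thesis unfolding P_def by blast
qed

definition dominates_missing_edge :: "'a \<Rightarrow> nat \<Rightarrow> bool" where
  "dominates_missing_edge w i \<longleftrightarrow> (\<exists>x y. x \<in> P i \<and> missing V A x y \<and> A w x \<and> A w y)"

lemma not_dominates_next:
  assumes "j < k" "w \<in> P j"
  shows "\<not> dominates_missing_edge w (nxt j)"
  using out_exactly_one[OF assms] unfolding dominates_missing_edge_def by blast

lemma dominates_pred:
  assumes "p < k" "j < k" "j \<noteq> p" "w \<in> P j" "dominates_missing_edge w (nxt p)"
  shows "dominates_missing_edge w p"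
proof -
  obtain x y where xy: "x \<in> P (nxt p)" "missing V A x y" "A w x" "A w y"
    using assms(5) unfolding dominates_missing_edge_def by blast
  have y: "y \<in> P (nxt p)"
    using missing_edges_subset[OF missing_edge_of_missing[OF nxt_less xy(1,2)]] by blast
  have "A w z" if z: "z \<in> P p" for z
  proof -
    obtain y' where y': "y' \<in> {x, y}" "\<not> A z y'"
      using out_exactly_one[OF assms(1) z xy(1,2)] by blast
    then have "y' \<in> P (nxt p)" using xy(1) y by blast
    then have "A y' z"
      using adjacent_across[OF nxt_less assms(1) nxt_neq[OF assms(1)] _ z] y'(2) by blast
    then have "\<not> A z w"
      using back_arc_no_path2[OF assms(1) z \<open>y' \<in> P (nxt p)\<close>] y'(1) xy(3,4)
      unfolding no_path2_def by blast
    then show ?thesis using adjacent_across[OF assms(2,1,3,4) z] by blast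
  qed
  moreover have "a p \<in> P p" "b p \<in> P p" "missing V A (a p) (b p)"
    using missing_path_at[OF assms(1)] unfolding P_def missing_path_def by simp_all
  ultimately show ?thesis unfolding dominates_missing_edge_def by blast
qed

lemma not_dominates_missing_edge:
  assumes "i < k" "j < k" "i \<noteq> j" "w \<in> P j"
  shows "\<not> dominates_missing_edge w i"
proof -
  have "\<not> dominates_missing_edge w ((j + Suc m) mod k)" if "Suc m < k" for m
    using that
  proof (induction m)
    case 0
    then show ?case using not_dominates_next[OF assms(2,4)] by simp
  next
    case (Suc m)
    define p where "p = (j + Suc m) mod k"
    have "p \<noteq> j"
      using Suc.prems assms(2) unfolding p_def by (auto simp: mod_if)
    moreover have "nxt p = (j + Suc (Suc m)) mod k" unfolding p_def by (simp add: mod_Suc_eq)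
    ultimately show ?case
      using dominates_pred[OF _ assms(2) _ assms(4)] Suc k_ge_2 unfolding p_def by fastforce
  qed
  moreover obtain m where "Suc m < k" "(j + Suc m) mod k = i"
  proof (cases "j < i")
    case True
    then show thesis using that[of "i - j - 1"] assms(1) by simp
  next
    case False
    then show thesis using that[of "i + k - j - 1"] assms by simp
  qed
  ultimately show ?thesis by blast
qed

lemma in_neighbours_in_next:
  assumes "t < k" "v \<in> P t"
  shows "{y \<in> P (nxt t). A y v} =
           (if A (b (nxt t)) v then {b (nxt t)} else {a (nxt t), c (nxt t)})"
proof -
  let ?s = "nxt t"
  have "missing V A (a ?s) (b ?s)" "missing V A (c ?s) (b ?s)"
    using missing_partners[OF nxt_less] by blast+
  moreover have "a ?s \<in> P ?s" "c ?s \<in> P ?s" unfolding P_def by simp_all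
  ultimately have out: "A v (a ?s) \<longleftrightarrow> \<not> A v (b ?s)" "A v (c ?s) \<longleftrightarrow> \<not> A v (b ?s)"
    using out_exactly_one[OF assms] by blast+
  have "A y v \<longleftrightarrow> \<not> A v y" if "y \<in> P ?s" for y
    using adjacent_across[OF nxt_less assms(1) nxt_neq[OF assms(1)] that assms(2)]
      oriented_graph_arcD(3)[OF oriented, of y v] by blast
  then have "A (a ?s) v \<longleftrightarrow> \<not> A v (a ?s)" "A (b ?s) v \<longleftrightarrow> \<not> A v (b ?s)"
    "A (c ?s) v \<longleftrightarrow> \<not> A v (c ?s)"
    unfolding P_def by simp_all
  then show ?thesis using out unfolding P_def by auto
qed

lemma card_Nsec_path_vertex_in_next:
  assumes "t < k" "v \<in> P t" "\<forall>x\<in>P t. \<not> A x v"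
  shows "card (Nsec A (Kset k a b c) v) + card {y \<in> P (nxt t). A y v}
           = card (Nin A (Kset k a b c) v) + card {r. missing V A v r}"
proof (rule card_Nsec_by_in_neighbours[OF oriented])
  let ?K = "Kset k a b c" and ?s = "nxt t"
  have PK: "P i \<subseteq> ?K" if "i < k" for i using that unfolding Kset_eq by blast
  have partner_in_P: "r \<in> P t" if "missing V A v r" for r
    using missing_edges_subset[OF missing_edge_of_missing[OF assms(1,2) that]] by blast
  show "finite ?K" unfolding Kset_def by simp
  show "?K \<subseteq> V" using P_subset_V unfolding Kset_eq by blast
  show "v \<in> ?K" using PK[OF assms(1)] assms(2) by blast
  show "{y \<in> P ?s. A y v} \<subseteq> Nin A ?K v"
    using PK[OF nxt_less] unfolding Nin_def by blast
  show "\<forall>f\<in>{y \<in> P ?s. A y v}. \<not> (\<exists>u\<in>?K. A v u \<and> A u f)"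
    using back_arc_no_path2[OF assms(1,2)] unfolding no_path2_def by blast
  show "\<forall>r. missing V A v r \<longrightarrow> r \<in> ?K \<and> (\<exists>u\<in>?K. A v u \<and> A u r)"
    using missing_partner_path2[OF assms(1,2)] partner_in_P PK[OF nxt_less] PK[OF assms(1)] by blast
  show "\<forall>w\<in>Nin A ?K v - {y \<in> P ?s. A y v}. \<exists>u\<in>?K. A v u \<and> A u w"
  proof (intro ballI, rule ccontr)
    fix w assume w: "w \<in> Nin A ?K v - {y \<in> P ?s. A y v}"
      and unreached: "\<not> (\<exists>u\<in>?K. A v u \<and> A u w)"
    then obtain j where j: "j < k" "w \<in> P j" "A w v" unfolding Nin_def Kset_eq by blast
    have "j \<noteq> t" using assms(3) j(2,3) by blast
    have "j \<noteq> ?s" using w j(2,3) by blast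
    obtain r where r: "missing V A v r" using missing_partner_exists[OF assms(1,2)] by blast
    obtain u where u: "u \<in> P ?s" "A v u" "A u r"
      using missing_partner_path2[OF assms(1,2) r] by blast
    have "\<not> A u w" using unreached u(1,2) PK[OF nxt_less] by blast
    then have "A w u" using adjacent_across[OF j(1) nxt_less \<open>j \<noteq> ?s\<close> j(2) u(1)] by blast
    moreover have "no_path2 A r u" using back_arc_no_path2[OF assms(1) partner_in_P[OF r] u(1,3)] .
    ultimately have "\<not> A r w" unfolding no_path2_def by blast
    then have "A w r"
      using adjacent_across[OF j(1) assms(1) \<open>j \<noteq> t\<close> j(2) partner_in_P[OF r]] by blast
    then have "dominates_missing_edge w t"
      using assms(2) r j(3) unfolding dominates_missing_edge_def by blast
    then show False
      using not_dominates_missing_edge[OF assms(1) j(1) \<open>j \<noteq> t\<close>[symmetric] j(2)] by blast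
  qed
qed

lemma card_Nsec_path_vertex:
  assumes "t < k" "v \<in> P t" "\<forall>x\<in>P t. \<not> A x v"
  shows "card (Nsec A (Kset k a b c) v) + (if b (nxt t) \<in> Nin A (Kset k a b c) v then 1 else 2)
           = card (Nin A (Kset k a b c) v) + card {r. missing V A v r}"
proof -
  have "b (nxt t) \<in> Kset k a b c" using nxt_less unfolding Kset_def by blast
  then have "b (nxt t) \<in> Nin A (Kset k a b c) v \<longleftrightarrow> A (b (nxt t)) v" unfolding Nin_def by blast
  moreover have "a (nxt t) \<noteq> c (nxt t)"
    using missing_path_at[OF nxt_less] unfolding missing_path_def by blast
  ultimately show ?thesis
    using card_Nsec_path_vertex_in_next[OF assms] in_neighbours_in_next[OF assms(1,2)]
    by (cases "A (b (nxt t)) v") simp_all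
qed

lemma card_Nsec_end_vertex:
  assumes "t < k" "{v, w} = {a t, c t}" "w \<notin> Nin A (Kset k a b c) v"
  shows "if b (nxt t) \<in> Nin A (Kset k a b c) v
         then card (Nsec A (Kset k a b c) v) = card (Nin A (Kset k a b c) v)
         else card (Nsec A (Kset k a b c) v) + 1 = card (Nin A (Kset k a b c) v)"
proof -
  have ends: "v \<in> {a t, c t}" "w \<in> {a t, c t}" using assms(2) by blast+
  have "v \<in> P t" using ends(1) unfolding P_def by blast
  have "{r. missing V A v r} = {b t}" using ends(1) missing_partners[OF assms(1)] by blast
  moreover have "\<forall>x\<in>P t. \<not> A x v"
  proof
    fix x assume "x \<in> P t"
    then consider "x = b t" | "x = v" | "x = w" using assms(2) unfolding P_def by blast
    then show "\<not> A x v"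
    proof cases
      case 1
      then show ?thesis using \<open>{r. missing V A v r} = {b t}\<close> unfolding missing_def by blast
    next
      case 2
      then show ?thesis using oriented_graph_irrefl[OF oriented] by blast
    next
      case 3
      have "w \<in> Kset k a b c" using ends(2) assms(1) unfolding Kset_def by blast
      then show ?thesis using 3 assms(3) unfolding Nin_def by blast
    qed
  qed
  ultimately show ?thesis
    using card_Nsec_path_vertex[OF assms(1) \<open>v \<in> P t\<close>] by (simp split: if_splits)
qed

lemma card_Nsec_middle_vertex:
  assumes "t < k"
  shows "if b (nxt t) \<in> Nin A (Kset k a b c) (b t)
         then card (Nsec A (Kset k a b c) (b t)) = card (Nin A (Kset k a b c) (b t)) + 1
         else card (Nsec A (Kset k a b c) (b t)) = card (Nin A (Kset k a b c) (b t))"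
proof -
  have partners_b: "{r. missing V A (b t) r} = {a t, c t}" using missing_partners[OF assms] by blast
  moreover have "a t \<noteq> c t" using missing_path_at[OF assms] unfolding missing_path_def by blast
  moreover have "b t \<in> P t" unfolding P_def by blast
  moreover have "\<forall>x\<in>P t. \<not> A x (b t)"
    using partners_b oriented_graph_irrefl[OF oriented] unfolding P_def missing_def by blast
  ultimately show ?thesis using card_Nsec_path_vertex[OF assms, of "b t"] by (simp split: if_splits)
qed

end

theorem mainTheorem18:
  fixes V :: "'a set" and A :: "'a \<Rightarrow> 'a \<Rightarrow> bool"
    and k :: nat and a b c :: "nat \<Rightarrow> 'a" and t :: nat
  assumes "tmdp V A"
    and "double_cycle V A k a b c"
    and "t < k"
  defines "K \<equiv> Kset k a b c"
  shows "(c t \<notin> Nin A K (a t) \<longrightarrow>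
            (if b (Suc t mod k) \<in> Nin A K (a t)
             then card (Nsec A K (a t)) = card (Nin A K (a t))
             else card (Nsec A K (a t)) + 1 = card (Nin A K (a t))))
       \<and> (a t \<notin> Nin A K (c t) \<longrightarrow>
            (if b (Suc t mod k) \<in> Nin A K (c t)
             then card (Nsec A K (c t)) = card (Nin A K (c t))
             else card (Nsec A K (c t)) + 1 = card (Nin A K (c t))))
       \<and> (if b (Suc t mod k) \<in> Nin A K (b t)
             then card (Nsec A K (b t)) = card (Nin A K (b t)) + 1
             else card (Nsec A K (b t)) = card (Nin A K (b t)))"
proof -
  interpret double_cycle_digraph V A k a b c
    using assms(1,2) unfolding tmdp_def by unfold_locales blast+
  have "{c t, a t} = {a t, c t}" by blast
  then show ?thesis
    unfolding K_def
    using card_Nsec_end_vertex[OF assms(3)] card_Nsec_middle_vertex[OF assms(3)] by blast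
qed

end
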